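(* Let $\alpha\in(0,1)$. For every $t\ge0$ and every $k\in\mathbb{Z}^+$, $$e^{-t(\delta_0-A_\alpha)}(k)=\int_0^\infty P_s(k)\,d\mu_t^{[\alpha]}(s),$$ i.e. $e^{-t(\delta_0-A_\alpha)}=\int_0^\infty d\mu_t^{[\alpha]}(s)\,P_s$ as elements of $\mathbb{P}(\mathbb{Z}^+)$.
   Context: $A_\alpha\in\mathbb{P}(\mathbb{Z}^+)$ is given by $A_\alpha(0)=0$, $A_\alpha(k)=\alpha(1-\alpha)(2-\alpha)\cdots((k-1)-\alpha)/k!$ for $k\in\mathbb{N}$. Exponentials are taken in the convolution Banach algebra $L^1(\mathbb{Z})$ with unit $\delta_0$ (point mass at $0$): $e^{-t(\delta_0-F)}=e^{-t}\sum_{n\ge0}t^nF^{(n)}/n!$. $P_s=e^{-s}\sum_{k\ge0}s^k\delta_k/k!$ is the Poisson probability. $(\mu_t^{[\alpha]})_{t\ge0}$ is the convolution semigroup of Lévy stable probability measures of order $\alpha$ on $[0,\infty)$, characterized by $\int_0^\infty e^{-sz}d\mu_t^{[\alpha]}(s)=e^{-tz^{\alpha}}$ for all $z\in\mathbb{C}$ with $\mathrm{Re}\,z\ge0$ (principal branch of $z^\alpha$). *)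

theory Defs
  imports "HOL-Probability.Probability"
begin

text \<open>Probability on Z^+ represented as functions nat => real (values at k >= 0).\<close>

definition A_alpha :: "real \<Rightarrow> nat \<Rightarrow> real" where
  "A_alpha \<alpha> k = (if k = 0 then 0
     else \<alpha> * (\<Prod>j\<in>{1..<k}. (real j - \<alpha>)) / fact k)"

definition conv :: "(nat \<Rightarrow> real) \<Rightarrow> (nat \<Rightarrow> real) \<Rightarrow> nat \<Rightarrow> real" where
  "conv f g k = (\<Sum>i\<le>k. f i * g (k - i))"

definition delta0 :: "nat \<Rightarrow> real" where
  "delta0 k = (if k = 0 then 1 else 0)"

fun conv_pow :: "(nat \<Rightarrow> real) \<Rightarrow> nat \<Rightarrow> nat \<Rightarrow> real" where
  "conv_pow F 0 = delta0"
| "conv_pow F (Suc n) = conv F (conv_pow F n)"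

text \<open>e^{-t(delta_0 - F)} = e^{-t} sum_n t^n F^(n) / n!, evaluated at k.\<close>
definition exp_semigroup :: "real \<Rightarrow> (nat \<Rightarrow> real) \<Rightarrow> nat \<Rightarrow> real" where
  "exp_semigroup t F k = exp (- t) * (\<Sum>n. t ^ n * conv_pow F n k / fact n)"

definition poisson :: "real \<Rightarrow> nat \<Rightarrow> real" where
  "poisson s k = exp (- s) * s ^ k / fact k"

definition is_stable_measure :: "real \<Rightarrow> real \<Rightarrow> real measure \<Rightarrow> bool" where
  "is_stable_measure \<alpha> t \<mu> \<longleftrightarrow>
     sets \<mu> = sets borel \<and> prob_space \<mu> \<and> emeasure \<mu> {..<0} = 0 \<and>
     (\<forall>z::complex. Re z \<ge> 0 \<longrightarrow>
        (LINT s|\<mu>. exp (- (complex_of_real s * z))) = exp (- (complex_of_real t * z powr complex_of_real \<alpha>)))"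

end

theory Submission
  imports Defs
begin

text \<open>Both sides have the generating function \<open>w \<mapsto> exp (- t (1 - w)\<^sup>\<alpha>)\<close> on \<open>[0, 1)\<close>.
  On the left, \<open>A\<^sub>\<alpha>\<close> has generating function \<open>1 - (1 - w)\<^sup>\<alpha>\<close> by the binomial series, so its
  \<open>n\<close>-th convolution power has the \<open>n\<close>-th power of it, and summing the exponential series gives
  \<open>exp (- t (1 - w)\<^sup>\<alpha>)\<close>. On the right, \<open>\<Sum>\<^sub>k P\<^sub>s(k) w\<^sup>k = exp (- s (1 - w))\<close>, so integrating against
  \<open>\<mu>\<^sub>t\<close> yields its Laplace transform at \<open>1 - w\<close>, which is \<open>exp (- t (1 - w)\<^sup>\<alpha>)\<close> again.
  Power series that agree on \<open>(0, 1)\<close> have equal coefficients.\<close>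

lemma sums_of_suminf_ennreal_eq:
  fixes f :: "nat \<Rightarrow> real"
  assumes "\<And>i. 0 \<le> f i" "0 \<le> x" "(\<Sum>i. ennreal (f i)) = ennreal x"
  shows "f sums x"
  using summable_sums[OF summableI, of "\<lambda>i. ennreal (f i)"] assms by simp

lemma suminf_commute_ennreal:
  fixes f :: "nat \<Rightarrow> nat \<Rightarrow> ennreal"
  shows "(\<Sum>k. \<Sum>n. f n k) = (\<Sum>n. \<Sum>k. f n k)"
proof -
  have "(\<Sum>k. \<Sum>n. f n k) = (\<integral>\<^sup>+k. (\<Sum>n. f n k) \<partial>count_space UNIV)"
    by (simp add: nn_integral_count_space_nat)
  also have "\<dots> = (\<Sum>n. \<integral>\<^sup>+k. f n k \<partial>count_space UNIV)"
    by (rule nn_integral_suminf) simp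
  also have "\<dots> = (\<Sum>n. \<Sum>k. f n k)"
    by (simp add: nn_integral_count_space_nat)
  finally show ?thesis .
qed

lemma exp_real_sums: "(\<lambda>n. x ^ n / fact n) sums exp (x::real)"
  using exp_converges[of x] by (simp add: divide_inverse mult.commute scaleR_conv_of_real)

lemma conv_pow_nonneg:
  assumes "\<And>k. 0 \<le> F k"
  shows "0 \<le> conv_pow F n k"
  using assms
  by (induction n arbitrary: k) (auto simp: delta0_def conv_def intro!: sum_nonneg)

lemma conv_pow_eq_0_below:
  assumes "F 0 = 0" "k < n"
  shows "conv_pow F n k = 0"
  using assms(2)
proof (induction n arbitrary: k)
  case (Suc n)
  have "F i * conv_pow F n (k - i) = 0" if "i \<le> k" for i
    using assms(1) Suc that by (cases "i = 0") simp_all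
  then show ?case by (auto simp: conv_def intro!: sum.neutral)
qed simp

lemma summable_conv_pow_exp_series:
  assumes "F 0 = 0"
  shows "summable (\<lambda>n. t ^ n * conv_pow F n k / fact n)"
  by (rule summable_finite[of "{..k}"]) (auto simp: conv_pow_eq_0_below[where F=F, OF assms])

lemma conv_mult_power:
  "(\<Sum>i\<le>k. (f i * w ^ i) * (g (k - i) * w ^ (k - i))) = conv f g k * w ^ k"
proof -
  have "(f i * w ^ i) * (g (k - i) * w ^ (k - i)) = f i * g (k - i) * w ^ k" if "i \<le> k" for i
    using that by (simp add: mult_ac flip: power_add)
  then show ?thesis by (auto simp: conv_def sum_distrib_right intro!: sum.cong)
qed

lemma sums_conv_power:
  fixes f g :: "nat \<Rightarrow> real"
  assumes "\<And>k. 0 \<le> f k" "\<And>k. 0 \<le> g k" "0 \<le> w"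
    and F: "(\<lambda>k. f k * w ^ k) sums F" and G: "(\<lambda>k. g k * w ^ k) sums G"
  shows "(\<lambda>k. conv f g k * w ^ k) sums (F * G)"
proof -
  have "summable (\<lambda>k. norm (f k * w ^ k))" "summable (\<lambda>k. norm (g k * w ^ k))"
    using F G assms(1-3) by (simp_all add: sums_summable abs_mult)
  from Cauchy_product_sums[OF this] show ?thesis
    using sums_unique[OF F] sums_unique[OF G] by (simp add: conv_mult_power)
qed

lemma sums_conv_pow_power:
  fixes F :: "nat \<Rightarrow> real"
  assumes "\<And>k. 0 \<le> F k" "0 \<le> w" and G: "(\<lambda>k. F k * w ^ k) sums G"
  shows "(\<lambda>k. conv_pow F n k * w ^ k) sums (G ^ n)"
proof (induction n)
  case 0
  have "(\<lambda>k. conv_pow F 0 k * w ^ k) = (\<lambda>k. if k = 0 then 1 else 0)"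
    by (auto simp: delta0_def)
  then show ?case using sums_single[of 0 "\<lambda>_. 1::real"] by simp
next
  case (Suc n)
  show ?case
    using sums_conv_power[OF assms(1) conv_pow_nonneg[OF assms(1)] assms(2) G Suc] by simp
qed

text \<open>The double series over \<open>n\<close> (exponential series) and \<open>k\<close> (generating function) has
  nonnegative terms, so it may be summed in either order.\<close>

lemma sums_exp_semigroup_power:
  fixes F :: "nat \<Rightarrow> real"
  assumes F: "\<And>k. 0 \<le> F k" "F 0 = 0" and "0 \<le> t" "0 \<le> w"
    and G: "(\<lambda>k. F k * w ^ k) sums G"
  shows "(\<lambda>k. exp_semigroup t F k * w ^ k) sums exp (- t * (1 - G))"
proof -
  define c where "c n k = t ^ n / fact n * (conv_pow F n k * w ^ k)" for n k
  define b where "b k = (\<Sum>n. t ^ n * conv_pow F n k / fact n) * w ^ k" for k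
  have c_nonneg: "0 \<le> c n k" for n k
    unfolding c_def using conv_pow_nonneg[OF F(1)] assms(3,4) by simp
  have "0 \<le> G"
    using sums_le[OF _ sums_zero G] F(1) assms(4) by simp
  have col: "(\<lambda>n. c n k) sums b k" for k
  proof -
    have "summable (\<lambda>n. t ^ n * conv_pow F n k / fact n)"
      using F(2) by (rule summable_conv_pow_exp_series)
    from sums_mult2[OF summable_sums[OF this], of "w ^ k"] show ?thesis
      by (simp add: b_def c_def mult_ac)
  qed
  have row: "(\<lambda>k. c n k) sums (t ^ n / fact n * G ^ n)" for n
    unfolding c_def by (intro sums_mult sums_conv_pow_power F(1) assms(4) G)
  have "(\<Sum>k. ennreal (b k)) = (\<Sum>k. \<Sum>n. ennreal (c n k))"
    using suminf_ennreal_eq[OF c_nonneg col] by simp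
  also have "\<dots> = (\<Sum>n. \<Sum>k. ennreal (c n k))"
    by (rule suminf_commute_ennreal)
  also have "\<dots> = (\<Sum>n. ennreal ((t * G) ^ n / fact n))"
    using suminf_ennreal_eq[OF c_nonneg row] by (simp add: power_mult_distrib)
  also have "\<dots> = ennreal (exp (t * G))"
    using \<open>0 \<le> G\<close> assms(3) by (intro suminf_ennreal_eq exp_real_sums) simp
  finally have "b sums exp (t * G)"
    using sums_le[OF _ sums_zero col] c_nonneg by (intro sums_of_suminf_ennreal_eq) auto
  from sums_mult[OF this, of "exp (- t)"] show ?thesis
    by (simp add: exp_semigroup_def b_def algebra_simps flip: exp_add)
qed

lemma A_alpha_0 [simp]: "A_alpha a 0 = 0"
  by (simp add: A_alpha_def)

lemma A_alpha_nonneg: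
  assumes "0 < a" "a < 1"
  shows "0 \<le> A_alpha a k"
  unfolding A_alpha_def using assms by (auto intro!: divide_nonneg_pos mult_nonneg_nonneg prod_nonneg)

lemma A_alpha_eq_gbinomial:
  assumes "k > 0"
  shows "A_alpha a k = - (a gchoose k) * (- 1) ^ k"
proof -
  have "pochhammer (- a) k = - a * (\<Prod>j\<in>{1..<k}. (real j - a))"
    using assms unfolding pochhammer_prod
    by (simp add: prod.atLeast_Suc_lessThan[of 0] atLeast0LessThan[symmetric])
  then show ?thesis
    using assms by (simp add: A_alpha_def gbinomial_pochhammer flip: power_mult_distrib)
qed

lemma sums_A_alpha_power:
  assumes "0 \<le> w" "w < 1"
  shows "(\<lambda>k. A_alpha a k * w ^ k) sums (1 - (1 - w) powr a)"
proof -
  have "(\<lambda>k. (a gchoose k) * (- w) ^ k) sums (1 + - w) powr a"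
    by (rule gen_binomial_real) (use assms in simp)
  moreover have "A_alpha a k * w ^ k = (if k = 0 then 1 else 0) - (a gchoose k) * (- w) ^ k" for k
    by (simp add: A_alpha_eq_gbinomial power_minus[of w])
  ultimately show ?thesis
    using sums_diff[OF sums_single[of 0 "\<lambda>_. 1::real"]] by simp
qed

lemma powser_zero_on_unit_interval_imp_0:
  fixes d :: "nat \<Rightarrow> real"
  assumes "\<And>w. 0 < w \<Longrightarrow> w < 1 \<Longrightarrow> (\<lambda>k. d k * w ^ k) sums 0"
  shows "d 0 = 0"
proof -
  define h where "h x = (\<Sum>k. d k * x ^ k)" for x :: real
  have "summable (\<lambda>k. d k * (1/2::real) ^ k)"
    using assms[of "1/2"] by (simp add: sums_summable)
  then have "isCont h 0"
    unfolding h_def by (rule isCont_powser) simp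
  then have "(h \<longlongrightarrow> h 0) (at_right 0)"
    unfolding isCont_def by (rule tendsto_mono[OF at_le, rotated]) simp
  moreover have "\<forall>\<^sub>F x in at_right 0. h x = 0"
    using eventually_at_right_real[of 0 1]
    by (rule eventually_mono) (auto simp: h_def intro: sums_unique[symmetric] assms)
  then have "(h \<longlongrightarrow> 0) (at_right 0)"
    by (rule tendsto_eventually)
  ultimately have "h 0 = 0"
    by (rule tendsto_unique[OF trivial_limit_at_right_real])
  then show ?thesis by (simp add: h_def)
qed

lemma powser_zero_on_unit_interval_imp_coeff_0:
  fixes d :: "nat \<Rightarrow> real"
  assumes "\<And>w. 0 < w \<Longrightarrow> w < 1 \<Longrightarrow> (\<lambda>k. d k * w ^ k) sums 0"
  shows "d k = 0"
  using assms
proof (induction k arbitrary: d)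
  case 0
  then show ?case by (rule powser_zero_on_unit_interval_imp_0)
next
  case (Suc k)
  have "d 0 = 0" by (rule powser_zero_on_unit_interval_imp_0) fact
  have "(\<lambda>i. d (Suc i) * w ^ i) sums 0" if "0 < w" "w < 1" for w
  proof -
    have "(\<lambda>i. d (Suc i) * w ^ Suc i) sums 0"
      using sums_Suc_iff[of "\<lambda>i. d i * w ^ i"] Suc.prems[OF that] \<open>d 0 = 0\<close> by simp
    from sums_mult[OF this, of "inverse w"] show ?thesis
      using that by (simp add: field_simps)
  qed
  then show ?case by (rule Suc.IH)
qed

lemma powser_coeffs_unique:
  fixes a b :: "nat \<Rightarrow> real"
  assumes "\<And>w. 0 < w \<Longrightarrow> w < 1 \<Longrightarrow> (\<lambda>k. a k * w ^ k) sums f w"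
    and "\<And>w. 0 < w \<Longrightarrow> w < 1 \<Longrightarrow> (\<lambda>k. b k * w ^ k) sums f w"
  shows "a k = b k"
proof -
  have "(\<lambda>k. (a k - b k) * w ^ k) sums 0" if "0 < w" "w < 1" for w
    using sums_diff[OF assms[OF that]] by (simp add: left_diff_distrib)
  then show ?thesis
    using powser_zero_on_unit_interval_imp_coeff_0[of "\<lambda>k. a k - b k"] by simp
qed

lemma sums_poisson_power: "(\<lambda>k. poisson s k * w ^ k) sums exp (- (s * (1 - w)))"
proof -
  have "exp (- s) * exp (s * w) = exp (- (s * (1 - w)))"
    by (simp add: algebra_simps flip: exp_add)
  with sums_mult[OF exp_real_sums[of "s * w"], of "exp (- s)"] show ?thesis
    by (simp add: poisson_def power_mult_distrib mult_ac)
qed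

lemma poisson_nonneg: "0 \<le> s \<Longrightarrow> 0 \<le> poisson s k"
  by (simp add: poisson_def)

lemma poisson_le_1:
  assumes "0 \<le> s"
  shows "poisson s k \<le> 1"
proof -
  have "poisson s k \<le> (\<Sum>j. poisson s j)"
    using sums_poisson_power[of s 1] poisson_nonneg[OF assms]
    by (intro sum_le_suminf[of _ "{k}", simplified]) (auto simp: sums_summable)
  also have "\<dots> = 1"
    using sums_unique[OF sums_poisson_power[of s 1]] by simp
  finally show ?thesis .
qed

lemma sums_poisson_mixture_power:
  assumes "prob_space \<mu>" and sets: "sets \<mu> = sets borel" and nonneg: "AE s in \<mu>. 0 \<le> s"
    and "0 \<le> w" "w \<le> 1"
  shows "(\<lambda>k. (LINT s|\<mu>. poisson s k) * w ^ k) sums (LINT s|\<mu>. exp (- (s * (1 - w))))"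
proof -
  interpret prob_space \<mu> by fact
  have measurable: "g \<in> borel_measurable \<mu>" if "continuous_on UNIV g" for g :: "real \<Rightarrow> real"
    unfolding measurable_cong_sets[OF sets refl] using that by (rule borel_measurable_continuous_onI)
  have [measurable]: "(\<lambda>s. poisson s k) \<in> borel_measurable \<mu>" for k
    unfolding poisson_def by (intro measurable continuous_intros) simp
  have [measurable]: "(\<lambda>s. exp (- (s * (1 - w)))) \<in> borel_measurable \<mu>"
    by (intro measurable continuous_intros)
  have integrable_poisson: "integrable \<mu> (\<lambda>s. poisson s k)" for k
    by (rule integrable_const_bound[where B=1])
       (use nonneg in \<open>auto elim!: eventually_mono simp: poisson_nonneg poisson_le_1\<close>)
  have integrable_exp: "integrable \<mu> (\<lambda>s. exp (- (s * (1 - w))))"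
    by (rule integrable_const_bound[where B=1]) (use nonneg assms(5) in \<open>auto elim!: eventually_mono\<close>)
  have "(\<Sum>k. ennreal ((LINT s|\<mu>. poisson s k) * w ^ k)) = (\<Sum>k. \<integral>\<^sup>+s. ennreal (poisson s k * w ^ k) \<partial>\<mu>)"
  proof -
    have "(\<integral>\<^sup>+s. ennreal (poisson s k * w ^ k) \<partial>\<mu>) = ennreal ((LINT s|\<mu>. poisson s k) * w ^ k)" for k
      using integrable_poisson[of k] nonneg assms(4)
      by (subst nn_integral_eq_integral) (auto elim!: eventually_mono simp: poisson_nonneg)
    then show ?thesis by simp
  qed
  also have "\<dots> = (\<integral>\<^sup>+s. (\<Sum>k. ennreal (poisson s k * w ^ k)) \<partial>\<mu>)"
    by (rule nn_integral_suminf[symmetric]) measurable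
  also have "\<dots> = (\<integral>\<^sup>+s. ennreal (exp (- (s * (1 - w)))) \<partial>\<mu>)"
    by (rule nn_integral_cong_AE)
       (use nonneg assms(4) in \<open>auto elim!: eventually_mono intro!: suminf_ennreal_eq sums_poisson_power mult_nonneg_nonneg poisson_nonneg\<close>)
  also have "\<dots> = ennreal (LINT s|\<mu>. exp (- (s * (1 - w))))"
    by (rule nn_integral_eq_integral[OF integrable_exp]) simp
  finally show ?thesis
    using nonneg assms(4)
    by (intro sums_of_suminf_ennreal_eq mult_nonneg_nonneg integral_nonneg_AE)
       (auto elim!: eventually_mono simp: poisson_nonneg)
qed

lemma stable_measure_AE_nonneg:
  assumes "is_stable_measure a t \<mu>"
  shows "AE s in \<mu>. 0 \<le> s"
proof -
  have "{..<0::real} \<in> null_sets \<mu>"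
    using assms by (auto simp: is_stable_measure_def null_sets_def)
  from AE_not_in[OF this] show ?thesis by (rule eventually_mono) auto
qed

lemma stable_measure_laplace_real:
  assumes "is_stable_measure a t \<mu>" "0 \<le> x"
  shows "(LINT s|\<mu>. exp (- (s * x))) = exp (- t * x powr a)"
proof -
  have "complex_of_real (LINT s|\<mu>. exp (- (s * x)))
      = (LINT s|\<mu>. exp (- (complex_of_real s * complex_of_real x)))"
    by (simp flip: integral_complex_of_real exp_of_real)
  also have "\<dots> = exp (- (complex_of_real t * complex_of_real x powr complex_of_real a))"
    using assms by (simp add: is_stable_measure_def)
  also have "\<dots> = complex_of_real (exp (- t * x powr a))"
    using assms(2) by (simp add: powr_of_real flip: exp_of_real)
  finally show ?thesis by (simp only: of_real_eq_iff)
qed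

lemma sums_exp_semigroup_A_alpha_power:
  assumes "0 < a" "a < 1" "0 \<le> t" "0 \<le> w" "w < 1"
  shows "(\<lambda>k. exp_semigroup t (A_alpha a) k * w ^ k) sums exp (- t * (1 - w) powr a)"
  using sums_exp_semigroup_power[OF A_alpha_nonneg[OF assms(1,2)] A_alpha_0 assms(3,4)
      sums_A_alpha_power[OF assms(4,5)]]
  by simp

lemma sums_stable_poisson_mixture_power:
  assumes "is_stable_measure a t \<mu>" "0 \<le> w" "w \<le> 1"
  shows "(\<lambda>k. (LINT s|\<mu>. poisson s k) * w ^ k) sums exp (- t * (1 - w) powr a)"
proof -
  have "prob_space \<mu>" "sets \<mu> = sets borel"
    using assms(1) by (simp_all add: is_stable_measure_def)
  from sums_poisson_mixture_power[OF this stable_measure_AE_nonneg[OF assms(1)] assms(2,3)]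
  show ?thesis
    using stable_measure_laplace_real[OF assms(1), of "1 - w"] assms(3) by simp
qed

theorem proposition5p6:
  fixes \<alpha> t :: real and \<mu> :: "real measure" and k :: nat
  assumes "0 < \<alpha>" "\<alpha> < 1" "0 \<le> t"
    and "is_stable_measure \<alpha> t \<mu>"
  shows "exp_semigroup t (A_alpha \<alpha>) k = (LINT s|\<mu>. poisson s k)"
  using sums_exp_semigroup_A_alpha_power[OF assms(1-3)]
    sums_stable_poisson_mixture_power[OF assms(4)]
  by (intro powser_coeffs_unique[where f="\<lambda>w. exp (- t * (1 - w) powr \<alpha>)"]) auto

end
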